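(* Let $\mathcal{G}$ be a network of type $\mathcal{C}^1$ with exactly two stubborn agents $s_1,s_2$, neither having a self-loop ($w_{s_1s_1}=w_{s_2s_2}=0$), whose opinions evolve by the Friedkin–Johnsen model $\mathbf{x}(k+1)=(I-\beta)W\mathbf{x}(k)+\beta\mathbf{x}(0)$, and suppose $\beta_{s_2}\ge 1/2$. Then for either stubborn agent $s_i$ ($i\in\{1,2\}$) there always exists an edge modification $(a,b,d)$ which increases the influence centrality $c_{s_i}$.
   Context: Let $\mathcal{G}=(\mathcal{V},\mathcal{E})$, $\mathcal{V}=\{1,\dots,n\}$, be a directed graph, where an edge $(i,j)$ means information flows from $i$ to $j$. Its weighted adjacency matrix $W=[w_{ij}]$ is row-stochastic with $w_{ij}>0$ iff $(j,i)\in\mathcal{E}$. In the Friedkin–Johnsen model, $\beta=\mathrm{diag}(\beta_1,\dots,\beta_n)$ with $\beta_i\in[0,1]$, and agent $i$ is stubborn if $\beta_i>0$. Here exactly two agents $s_1,s_2$ are stubborn, with $\beta_{s_1},\beta_{s_2}\in(0,1)$. The influence centrality vector is $\mathbf{c}=P^T\mathbb{1}_n/n$ with $P=(I_n-(I_n-\beta)W)^{-1}\beta$. Type $\mathcal{C}^1$: $\mathcal{G}$ is strongly connected and some node $m$ belongs to every cycle of $\mathcal{G}$ other than self-loops; such an $m$ is a global communicator. The stubborn agents are labelled using the level decomposition relative to $m$: the nodes are partitioned into disjoint sets $\mathcal{L}_0^m=\{m\},\mathcal{L}_1^m,\dots,\mathcal{L}_q^m$ such that every node $j\in\mathcal{L}_z^m$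 ($z\ge1$) has its in-neighbours (other than itself) only in $\{m\}\cup\mathcal{L}_1^m\cup\dots\cup\mathcal{L}_{z-1}^m$ and at least one in-neighbour in $\mathcal{L}_{z-1}^m$; $s_1\in\mathcal{L}_u^m$ and $s_2\in\mathcal{L}_v^m$ with $u\le v$. Edge modification $(a,b,d)$: for distinct nodes $a,b,d$ with $w_{bd}>0$ and some $0<w<w_{bd}$, replace $w_{ba}$ by $w_{ba}+w$ (adding edge $(a,b)$ if absent) and $w_{bd}$ by $w_{bd}-w$, so the row sum of $b$ is unchanged. *)

theory Defs
  imports "HOL-Analysis.Analysis"
begin

text \<open>Nodes are the elements of a finite type 'n. W $ i $ j is the weight w_ij;
  w_ij > 0 iff (j,i) is an edge, i.e. information flows from j to i.\<close>

definition edges :: "real^'n^'n \<Rightarrow> ('n \<times> 'n) set" where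
  "edges W = {(j, i). W $ i $ j > 0}"

definition row_stochastic :: "real^'n^'n \<Rightarrow> bool" where
  "row_stochastic W \<longleftrightarrow> (\<forall>i j. W $ i $ j \<ge> 0) \<and> (\<forall>i. (\<Sum>j\<in>UNIV. W $ i $ j) = 1)"

definition strongly_connected :: "real^'n^'n \<Rightarrow> bool" where
  "strongly_connected W \<longleftrightarrow> (\<forall>i j. (i, j) \<in> (edges W)\<^sup>*)"

definition is_cycle :: "real^'n^'n \<Rightarrow> 'n list \<Rightarrow> bool" where
  "is_cycle W cs \<longleftrightarrow> length cs \<ge> 2 \<and> distinct cs \<and>
     (\<forall>k < length cs. (cs ! k, cs ! ((k + 1) mod length cs)) \<in> edges W)"

definition global_communicator :: "real^'n^'n \<Rightarrow> 'n \<Rightarrow> bool" where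
  "global_communicator W m \<longleftrightarrow> (\<forall>cs. is_cycle W cs \<longrightarrow> m \<in> set cs)"

definition type_C1 :: "real^'n^'n \<Rightarrow> 'n \<Rightarrow> bool" where
  "type_C1 W m \<longleftrightarrow> strongly_connected W \<and> global_communicator W m"

text \<open>Level decomposition relative to m: lev j = z means j \<in> L_z^m.\<close>
definition level_decomp :: "real^'n^'n \<Rightarrow> 'n \<Rightarrow> ('n \<Rightarrow> nat) \<Rightarrow> bool" where
  "level_decomp W m lev \<longleftrightarrow> lev m = 0 \<and>
     (\<forall>j. j \<noteq> m \<longrightarrow> lev j \<ge> 1 \<and>
        (\<forall>k. k \<noteq> j \<and> W $ j $ k > 0 \<longrightarrow> lev k < lev j) \<and>
        (\<exists>k. W $ j $ k > 0 \<and> lev k = lev j - 1))"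

definition diag_mat :: "real^'n \<Rightarrow> real^'n^'n" where
  "diag_mat b = (\<chi> i j. if i = j then b $ i else 0)"

definition FJ_P :: "real^'n^'n \<Rightarrow> real^'n \<Rightarrow> real^'n^'n" where
  "FJ_P W b = matrix_inv (mat 1 - (mat 1 - diag_mat b) ** W) ** diag_mat b"

definition influence_centrality :: "real^'n^'n \<Rightarrow> real^'n \<Rightarrow> real^'n" where
  "influence_centrality W b = (\<chi> j. (\<Sum>i\<in>UNIV. FJ_P W b $ i $ j) / real CARD('n))"

definition edge_mod :: "real^'n^'n \<Rightarrow> 'n \<Rightarrow> 'n \<Rightarrow> 'n \<Rightarrow> real \<Rightarrow> real^'n^'n" where
  "edge_mod W a b d w = (\<chi> i j. if i = b \<and> j = a then W $ i $ j + w
                                else if i = b \<and> j = d then W $ i $ j - w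
                                else W $ i $ j)"

definition valid_edge_mod :: "real^'n^'n \<Rightarrow> 'n \<Rightarrow> 'n \<Rightarrow> 'n \<Rightarrow> real \<Rightarrow> bool" where
  "valid_edge_mod W a b d w \<longleftrightarrow> a \<noteq> b \<and> b \<noteq> d \<and> a \<noteq> d \<and> W $ b $ d > 0 \<and> 0 < w \<and> w < W $ b $ d"

end

theory Submission
  imports Defs
begin

(* The column h of P belonging to s solves h = (I - \<beta>) W h + \<beta>_s e_s, and c_s is
   proportional to the sum of its entries. The modification (a, b, d) by w changes h by a
   vector \<delta> solving \<delta> = (I - \<beta>) W' \<delta> + (1 - \<beta>_b) w (h_a - h_d) e_b, so by the discrete
   maximum principle for the strongly connected, row-stochastic W' every entry of \<delta> is
   positive as soon as h_a > h_d. It remains to find an edge (d, b) and a node a \<notin> {b, d}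
   with h_a > h_d. If there were none, the source s, which has no self-loop and where
   1 - h > 0 by the maximum principle again, would strictly dominate every other node;
   hence no edge could join two distinct nodes other than s, and a third, non-stubborn
   node j would be fed only by s and itself, forcing h_j = h_s. *)

definition fj_solution :: "real^'n^'n \<Rightarrow> real^'n \<Rightarrow> real^'n \<Rightarrow> real^'n \<Rightarrow> bool" where
  "fj_solution W \<beta> r x \<longleftrightarrow> (\<forall>i. x $ i = (1 - \<beta> $ i) * (W *v x) $ i + r $ i)"

lemma row_stochastic_nonneg: "row_stochastic W \<Longrightarrow> 0 \<le> W $ i $ k"
  unfolding row_stochastic_def by blast

lemma row_stochastic_mult_vec_one: "row_stochastic W \<Longrightarrow> W *v 1 = 1"
  unfolding row_stochastic_def by (simp add: matrix_vector_mult_def vec_eq_iff)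

lemma row_stochastic_mult_vec_ge:
  assumes "row_stochastic W" and "\<And>k. 0 < W $ i $ k \<Longrightarrow> \<mu> \<le> x $ k"
  shows "\<mu> \<le> (W *v x) $ i"
proof -
  have "(\<Sum>k\<in>UNIV. W $ i $ k) = 1"
    using assms(1) unfolding row_stochastic_def by blast
  then have "\<mu> = (\<Sum>k\<in>UNIV. W $ i $ k * \<mu>)"
    by (metis mult_1 sum_distrib_right)
  also have "\<dots> \<le> (\<Sum>k\<in>UNIV. W $ i $ k * x $ k)"
  proof (intro sum_mono)
    fix k
    show "W $ i $ k * \<mu> \<le> W $ i $ k * x $ k"
      using assms(2)[of k] row_stochastic_nonneg[OF assms(1), of i k]
      by (cases "0 < W $ i $ k") (auto intro: mult_left_mono)
  qed
  finally show ?thesis by (simp add: matrix_vector_mult_def)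
qed

lemma row_stochastic_mult_vec_eq:
  assumes "row_stochastic W" and "\<And>k. 0 < W $ i $ k \<Longrightarrow> \<mu> \<le> x $ k"
    and "(W *v x) $ i \<le> \<mu>" and "0 < W $ i $ k"
  shows "x $ k = \<mu>"
proof -
  have nonneg: "0 \<le> W $ i $ k * (x $ k - \<mu>)" for k
    using assms(2)[of k] row_stochastic_nonneg[OF assms(1), of i k]
    by (cases "0 < W $ i $ k") auto
  have "(W *v (x - \<mu> *\<^sub>R 1)) $ i = (W *v x) $ i - \<mu>"
    by (simp add: matrix_vector_mult_diff_distrib matrix_vector_mult_scaleR
        row_stochastic_mult_vec_one[OF assms(1)])
  then have "(\<Sum>k\<in>UNIV. W $ i $ k * (x $ k - \<mu>)) \<le> 0"
    using assms(3) by (simp add: matrix_vector_mult_def)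
  then have "W $ i $ k * (x $ k - \<mu>) = 0"
    using nonneg sum_nonneg_eq_0_iff[of UNIV "\<lambda>k. W $ i $ k * (x $ k - \<mu>)"]
    by (simp add: order_antisym sum_nonneg)
  then show ?thesis using assms(4) by simp
qed

lemma strongly_connected_in_closed:
  assumes "strongly_connected W" and "i \<in> S"
    and "\<And>i k. i \<in> S \<Longrightarrow> 0 < W $ i $ k \<Longrightarrow> k \<in> S"
  shows "j \<in> S"
proof -
  have "(j, i) \<in> (edges W)\<^sup>*" using assms(1) unfolding strongly_connected_def by blast
  then show ?thesis
    by (induction rule: converse_rtrancl_induct) (use assms(2,3) in \<open>auto simp: edges_def\<close>)
qed

lemma strongly_connected_in_neighbour:
  assumes "strongly_connected W" and "j \<noteq> d"
  shows "\<exists>u. u \<noteq> j \<and> 0 < W $ j $ u"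
proof (rule ccontr)
  assume no_in_neighbour: "\<not> ?thesis"
  have "d \<in> {j}"
    by (rule strongly_connected_in_closed[OF assms(1), of j]) (use no_in_neighbour in auto)
  then show False using assms(2) by simp
qed

lemma fj_solution_nonneg:
  assumes rs: "row_stochastic W" and sc: "strongly_connected W"
    and \<beta>: "\<forall>i. 0 \<le> \<beta> $ i \<and> \<beta> $ i \<le> 1" "0 < \<beta> $ i0"
    and x: "fj_solution W \<beta> r x" and r: "\<forall>i. 0 \<le> r $ i"
  shows "0 \<le> x $ j"
proof (rule ccontr)
  assume "\<not> 0 \<le> x $ j"
  define \<mu> where "\<mu> = Min (range (($) x))"
  have \<mu>_le: "\<mu> \<le> x $ k" for k
    unfolding \<mu>_def by (intro Min_le) auto
  have "\<mu> \<in> range (($) x)"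
    unfolding \<mu>_def by (intro Min_in) auto
  then obtain i1 where i1: "x $ i1 = \<mu>" by auto
  have "\<mu> < 0" using \<mu>_le[of j] \<open>\<not> 0 \<le> x $ j\<close> by simp
  have minimizer: "\<beta> $ i = 0 \<and> (0 < W $ i $ k \<longrightarrow> x $ k = \<mu>)" if "x $ i = \<mu>" for i k
  proof -
    have Wx: "\<mu> \<le> (W *v x) $ i" by (rule row_stochastic_mult_vec_ge[OF rs \<mu>_le])
    have eq: "\<mu> = (1 - \<beta> $ i) * (W *v x) $ i + r $ i"
      using x that unfolding fj_solution_def by metis
    have "(1 - \<beta> $ i) * \<mu> \<le> (1 - \<beta> $ i) * (W *v x) $ i"
      using \<beta>(1) by (intro mult_left_mono[OF Wx]) simp
    also have "\<dots> \<le> \<mu>" using eq r[rule_format, of i] by linarith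
    finally have "0 \<le> \<beta> $ i * \<mu>" by (simp add: algebra_simps)
    then have "\<beta> $ i = 0"
      using \<open>\<mu> < 0\<close> \<beta>(1)[rule_format, of i] by (simp add: zero_le_mult_iff)
    then have "(W *v x) $ i \<le> \<mu>" using eq r[rule_format, of i] by simp
    then show ?thesis using row_stochastic_mult_vec_eq[OF rs \<mu>_le] \<open>\<beta> $ i = 0\<close> by blast
  qed
  have "x $ i0 = \<mu>"
    using strongly_connected_in_closed[OF sc, of i1 "{i. x $ i = \<mu>}"] i1 minimizer by blast
  then show False using minimizer \<beta>(2) by simp
qed

lemma fj_solution_pos:
  assumes rs: "row_stochastic W" and sc: "strongly_connected W"
    and \<beta>: "\<forall>i. 0 \<le> \<beta> $ i \<and> \<beta> $ i < 1" "0 < \<beta> $ i0"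
    and x: "fj_solution W \<beta> r x" and r: "\<forall>i. 0 \<le> r $ i" "0 < r $ j0"
  shows "0 < x $ j"
proof (rule ccontr)
  assume "\<not> 0 < x $ j"
  have x_nonneg: "0 \<le> x $ k" for k
    using fj_solution_nonneg[OF rs sc _ \<beta>(2) x r(1)] \<beta>(1) by (simp add: less_imp_le)
  have zero: "r $ i = 0 \<and> (0 < W $ i $ k \<longrightarrow> x $ k = 0)" if "x $ i = 0" for i k
  proof -
    have Wx: "0 \<le> (W *v x) $ i" by (rule row_stochastic_mult_vec_ge[OF rs x_nonneg])
    have eq: "0 = (1 - \<beta> $ i) * (W *v x) $ i + r $ i"
      using x that unfolding fj_solution_def by metis
    have "0 < 1 - \<beta> $ i" using \<beta>(1) by simp
    then have "0 \<le> (1 - \<beta> $ i) * (W *v x) $ i" using Wx by simp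
    then have "r $ i = 0 \<and> (1 - \<beta> $ i) * (W *v x) $ i = 0"
      using eq r(1)[rule_format, of i] by linarith
    then have "r $ i = 0 \<and> (W *v x) $ i \<le> 0" using \<open>0 < 1 - \<beta> $ i\<close> by simp
    then show ?thesis using row_stochastic_mult_vec_eq[OF rs x_nonneg] by blast
  qed
  have "x $ j0 = 0"
    using strongly_connected_in_closed[OF sc, of j "{i. x $ i = 0}"] zero
      \<open>\<not> 0 < x $ j\<close> x_nonneg[of j] by force
  then show False using zero r(2) by simp
qed

lemma diag_mat_mult_vec: "(diag_mat b *v x) $ i = b $ i * x $ i"
proof -
  have "(diag_mat b *v x) $ i = (\<Sum>j\<in>UNIV. if j = i then b $ i * x $ j else 0)"
    unfolding diag_mat_def matrix_vector_mult_def vec_lambda_beta by (rule sum.cong) auto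
  then show ?thesis by simp
qed

lemma fj_matrix_mult_vec:
  "((mat 1 - (mat 1 - diag_mat \<beta>) ** W) *v x) $ i = x $ i - (1 - \<beta> $ i) * (W *v x) $ i"
proof -
  have "(mat 1 - (mat 1 - diag_mat \<beta>) ** W) *v x = x - (W *v x - diag_mat \<beta> *v (W *v x))"
    by (simp add: matrix_vector_mult_diff_rdistrib matrix_vector_mul_assoc[symmetric])
  then show ?thesis by (simp add: diag_mat_mult_vec left_diff_distrib)
qed

lemma fj_solution_iff:
  "fj_solution W \<beta> r x \<longleftrightarrow> (mat 1 - (mat 1 - diag_mat \<beta>) ** W) *v x = r"
  by (simp add: fj_solution_def vec_eq_iff fj_matrix_mult_vec diff_eq_eq add.commute)

lemma fj_matrix_invertible:
  fixes W :: "real^'n^'n"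
  assumes "row_stochastic W" and "strongly_connected W"
    and "\<forall>i. 0 \<le> \<beta> $ i \<and> \<beta> $ i \<le> 1" and "0 < \<beta> $ i0"
  shows "invertible (mat 1 - (mat 1 - diag_mat \<beta>) ** W)"
  unfolding invertible_left_inverse matrix_left_invertible_ker
proof (intro allI impI)
  fix x :: "real^'n"
  let ?A = "mat 1 - (mat 1 - diag_mat \<beta>) ** W"
  assume "?A *v x = 0"
  moreover have "?A *v (- x) = - (?A *v x)"
    using matrix_vector_mult_diff_distrib[of ?A 0 x] by simp
  ultimately have x: "fj_solution W \<beta> 0 x" and minus_x: "fj_solution W \<beta> 0 (- x)"
    by (simp_all add: fj_solution_iff)
  have "0 \<le> x $ i" and "0 \<le> (- x) $ i" for i
    using fj_solution_nonneg[OF assms x, where j=i] fj_solution_nonneg[OF assms minus_x, where j=i]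
    by simp_all
  then show "x = 0" by (simp add: vec_eq_iff order_antisym)
qed

lemma FJ_P_column_fj_solution:
  assumes "invertible (mat 1 - (mat 1 - diag_mat \<beta>) ** W)"
  shows "fj_solution W \<beta> (\<chi> i. if i = s then \<beta> $ s else 0) (column s (FJ_P W \<beta>))"
proof -
  let ?A = "mat 1 - (mat 1 - diag_mat \<beta>) ** W"
  have "?A ** matrix_inv ?A = mat 1"
    using assms unfolding invertible_def matrix_inv_def by (rule someI_ex[THEN conjunct1])
  then have "?A ** FJ_P W \<beta> = diag_mat \<beta>"
    unfolding FJ_P_def by (simp add: matrix_mul_assoc)
  then have "?A *v column s (FJ_P W \<beta>) = column s (diag_mat \<beta>)"
    by (simp add: vec_eq_iff column_def matrix_matrix_mult_def matrix_vector_mult_def)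
  then show ?thesis
    by (simp add: fj_solution_iff column_def diag_mat_def vec_eq_iff)
qed

lemma fj_solution_complement:
  assumes "row_stochastic W" and "fj_solution W \<beta> r x"
  shows "fj_solution W \<beta> (\<beta> - r) (1 - x)"
  using assms
  by (simp add: fj_solution_def matrix_vector_mult_diff_distrib row_stochastic_mult_vec_one
      algebra_simps)

lemma edge_mod_mult_vec:
  assumes "a \<noteq> d"
  shows "(edge_mod W a b d w *v x) $ i = (W *v x) $ i + (if i = b then w * (x $ a - x $ d) else 0)"
proof (cases "i = b")
  case True
  then have "edge_mod W a b d w $ i = W $ i + w *\<^sub>R (axis a 1 - axis d 1)"
    using assms by (auto simp: edge_mod_def vec_eq_iff axis_def)
  then have "(edge_mod W a b d w *v x) $ i = inner (W $ i + w *\<^sub>R (axis a 1 - axis d 1)) x"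
    by (simp only: matrix_vector_mul_component)
  then show ?thesis
    using True by (simp add: matrix_vector_mul_component inner_add_left inner_diff_left
        inner_axis' algebra_simps)
next
  case False
  then have "edge_mod W a b d w $ i = W $ i" by (simp add: edge_mod_def vec_eq_iff)
  then show ?thesis using False by (simp add: matrix_vector_mult_def)
qed

lemma row_stochastic_edge_mod:
  assumes "row_stochastic W" and "a \<noteq> d" and "0 \<le> w" and "w \<le> W $ b $ d"
  shows "row_stochastic (edge_mod W a b d w)"
proof -
  have "0 \<le> edge_mod W a b d w $ i $ k" for i k
    using assms row_stochastic_nonneg[OF assms(1), of i k] unfolding edge_mod_def by auto
  moreover have "edge_mod W a b d w *v 1 = 1"
    using edge_mod_mult_vec[OF assms(2)] row_stochastic_mult_vec_one[OF assms(1)]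
    by (simp add: vec_eq_iff)
  ultimately show ?thesis
    unfolding row_stochastic_def by (simp add: vec_eq_iff matrix_vector_mult_def)
qed

lemma strongly_connected_edge_mod:
  assumes "strongly_connected W" and "a \<noteq> d" and "0 \<le> w" and "w < W $ b $ d"
  shows "strongly_connected (edge_mod W a b d w)"
proof -
  have "edges W \<subseteq> edges (edge_mod W a b d w)"
    using assms(2-4) unfolding edges_def edge_mod_def by auto
  then show ?thesis
    using assms(1) unfolding strongly_connected_def by (meson rtrancl_mono subsetD)
qed

lemma influence_centrality_edge_mod_less:
  fixes W :: "real^'n^'n"
  assumes rs: "row_stochastic W" and sc: "strongly_connected W"
    and \<beta>: "\<forall>i. 0 \<le> \<beta> $ i \<and> \<beta> $ i < 1" "0 < \<beta> $ s"
    and "a \<noteq> d" and w: "0 < w" "w < W $ b $ d"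
    and gain: "FJ_P W \<beta> $ d $ s < FJ_P W \<beta> $ a $ s"
  shows "influence_centrality W \<beta> $ s < influence_centrality (edge_mod W a b d w) \<beta> $ s"
proof -
  define W' where "W' = edge_mod W a b d w"
  have rs': "row_stochastic W'"
    unfolding W'_def using rs \<open>a \<noteq> d\<close> w by (intro row_stochastic_edge_mod) auto
  have sc': "strongly_connected W'"
    unfolding W'_def using sc \<open>a \<noteq> d\<close> w by (intro strongly_connected_edge_mod) auto
  have \<beta>_le: "\<forall>i. 0 \<le> \<beta> $ i \<and> \<beta> $ i \<le> 1" using \<beta>(1) by (simp add: less_imp_le)
  define h h' where "h = column s (FJ_P W \<beta>)" and "h' = column s (FJ_P W' \<beta>)"
  have h: "fj_solution W \<beta> (\<chi> i. if i = s then \<beta> $ s else 0) h"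
    unfolding h_def by (intro FJ_P_column_fj_solution fj_matrix_invertible[OF rs sc \<beta>_le \<beta>(2)])
  have h': "fj_solution W' \<beta> (\<chi> i. if i = s then \<beta> $ s else 0) h'"
    unfolding h'_def by (intro FJ_P_column_fj_solution fj_matrix_invertible[OF rs' sc' \<beta>_le \<beta>(2)])
  define r where "r = (\<chi> i. (1 - \<beta> $ i) * ((W' *v h) $ i - (W *v h) $ i))"
  have \<delta>: "fj_solution W' \<beta> r (h' - h)"
    unfolding fj_solution_def
  proof
    fix i
    have "(h' - h) $ i = (1 - \<beta> $ i) * ((W' *v h') $ i - (W *v h) $ i)"
      using h h' unfolding fj_solution_def by (simp add: right_diff_distrib)
    also have "\<dots> = (1 - \<beta> $ i) * (W' *v (h' - h)) $ i + r $ i"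
      by (simp add: r_def matrix_vector_mult_diff_distrib algebra_simps)
    finally show "(h' - h) $ i = (1 - \<beta> $ i) * (W' *v (h' - h)) $ i + r $ i" .
  qed
  have "r $ i = (if i = b then (1 - \<beta> $ b) * (w * (h $ a - h $ d)) else 0)" for i
    unfolding r_def W'_def by (simp add: edge_mod_mult_vec[OF \<open>a \<noteq> d\<close>])
  moreover have "0 < h $ a - h $ d" using gain by (simp add: h_def column_def)
  ultimately have r_nonneg: "\<forall>i. 0 \<le> r $ i" and r_pos: "0 < r $ b"
    using \<beta>(1)[rule_format, of b] w by auto
  have "0 < (h' - h) $ i" for i
    by (rule fj_solution_pos[OF rs' sc' \<beta>(1,2) \<delta> r_nonneg r_pos])
  then have "(\<Sum>i\<in>UNIV. h $ i) < (\<Sum>i\<in>UNIV. h' $ i)"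
    by (intro sum_strict_mono) auto
  then show ?thesis
    by (simp add: influence_centrality_def h_def h'_def W'_def column_def divide_strict_right_mono)
qed

lemma fj_solution_lt_one:
  fixes W :: "real^'n^'n"
  assumes rs: "row_stochastic W" and sc: "strongly_connected W"
    and \<beta>: "\<forall>i. 0 \<le> \<beta> $ i \<and> \<beta> $ i < 1" "0 < \<beta> $ s" "0 < \<beta> $ t" and "t \<noteq> s"
    and h: "fj_solution W \<beta> (\<chi> i. if i = s then \<beta> $ s else 0) h"
  shows "h $ i < 1"
proof -
  let ?r = "\<beta> - (\<chi> i. if i = s then \<beta> $ s else 0)"
  have "fj_solution W \<beta> ?r (1 - h)"
    by (rule fj_solution_complement[OF rs h])
  moreover have "\<forall>i. 0 \<le> ?r $ i" and "0 < ?r $ t"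
    using \<beta> \<open>t \<noteq> s\<close> by auto
  ultimately have "0 < (1 - h) $ i"
    by (rule fj_solution_pos[OF rs sc \<beta>(1,2)])
  then show ?thesis by simp
qed

lemma exists_improving_edge_mod:
  fixes W :: "real^'n^'n"
  assumes rs: "row_stochastic W" and sc: "strongly_connected W" and card: "3 \<le> CARD('n)"
    and "t \<noteq> s" and \<beta>: "\<forall>i. i \<noteq> s \<and> i \<noteq> t \<longrightarrow> \<beta> $ i = 0" "0 < \<beta> $ s" "\<beta> $ s \<le> 1"
    and no_loop: "W $ s $ s = 0"
    and h: "fj_solution W \<beta> (\<chi> i. if i = s then \<beta> $ s else 0) h" and h_lt: "\<forall>i. h $ i < 1"
  shows "\<exists>a b d. a \<noteq> b \<and> b \<noteq> d \<and> a \<noteq> d \<and> 0 < W $ b $ d \<and> h $ d < h $ a"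
proof (rule ccontr)
  assume "\<not> ?thesis"
  then have no_gain: "h $ a \<le> h $ d" if "a \<noteq> b" "b \<noteq> d" "a \<noteq> d" "0 < W $ b $ d" for a b d
    using that by (meson not_le)
  have h_eq: "h $ i = (1 - \<beta> $ i) * (W *v h) $ i + (if i = s then \<beta> $ s else 0)" for i
    using h unfolding fj_solution_def by simp
  have source_max: "h $ a < h $ s" if "a \<noteq> s" for a
  proof -
    have "h $ a \<le> (W *v h) $ s"
    proof (rule row_stochastic_mult_vec_ge[OF rs])
      fix k
      assume "0 < W $ s $ k"
      moreover from this have "k \<noteq> s" using no_loop by auto
      ultimately show "h $ a \<le> h $ k"
        using no_gain[of a s k] \<open>a \<noteq> s\<close> by (cases "k = a") auto
    qed
    then have "(1 - \<beta> $ s) * h $ a \<le> (1 - \<beta> $ s) * (W *v h) $ s"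
      using \<beta>(3) by (simp add: mult_left_mono)
    moreover have "0 < \<beta> $ s * (1 - h $ a)" using \<beta>(2) h_lt by simp
    ultimately show ?thesis using h_eq[of s] by (simp add: algebra_simps)
  qed
  have "card {s, t} \<le> 2" by (simp add: card_insert_if)
  then have "{s, t} \<noteq> UNIV" using card by auto
  then obtain j where j: "j \<noteq> s" "j \<noteq> t" by blast
  have in_neighbours: "k = s \<or> k = j" if "0 < W $ j $ k" for k
    using no_gain[of s j k] source_max[of k] that j by fastforce
  have "(W *v h) $ j = h $ j" using h_eq[of j] \<beta>(1) j by simp
  moreover have "h $ j \<le> h $ k" if "0 < W $ j $ k" for k
    using in_neighbours[OF that] source_max[OF j(1)] by auto
  moreover obtain u where u: "u \<noteq> j" "0 < W $ j $ u"
    using strongly_connected_in_neighbour[OF sc j(1)] by blast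
  ultimately have "h $ u = h $ j" using row_stochastic_mult_vec_eq[OF rs] by (metis order_refl)
  moreover have "u = s" using in_neighbours[OF u(2)] u(1) by simp
  ultimately show False using source_max[OF j(1)] by simp
qed

theorem theorem3:
  fixes W :: "real^'n^'n" and \<beta> :: "real^'n" and m s1 s2 :: 'n and lev :: "'n \<Rightarrow> nat"
  assumes "CARD('n) \<ge> 3"
    and "row_stochastic W"
    and "type_C1 W m"
    and "level_decomp W m lev"
    and "\<forall>i. 0 \<le> \<beta> $ i \<and> \<beta> $ i \<le> 1"
    and "s1 \<noteq> s2"
    and "{i. \<beta> $ i > 0} = {s1, s2}"
    and "\<beta> $ s1 < 1" and "\<beta> $ s2 < 1"
    and "lev s1 \<le> lev s2"
    and "W $ s1 $ s1 = 0" and "W $ s2 $ s2 = 0"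
    and "\<beta> $ s2 \<ge> 1 / 2"
    and "s \<in> {s1, s2}"
  shows "\<exists>a b d w. valid_edge_mod W a b d w \<and>
           influence_centrality (edge_mod W a b d w) \<beta> $ s > influence_centrality W \<beta> $ s"
proof -
  note rs = assms(2)
  have sc: "strongly_connected W" using assms(3) unfolding type_C1_def by blast
  have stubborn: "0 < \<beta> $ i \<longleftrightarrow> i = s1 \<or> i = s2" for i
    using assms(7) by (auto simp: set_eq_iff)
  obtain t where t: "t \<in> {s1, s2}" "t \<noteq> s" using assms(6,14) by auto
  have \<beta>: "\<forall>i. 0 \<le> \<beta> $ i \<and> \<beta> $ i < 1"
    using assms(5,8,9) stubborn by (metis not_le order_le_less_trans)
  have \<beta>_st: "0 < \<beta> $ s" "0 < \<beta> $ t" using stubborn assms(14) t by auto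
  have "{s, t} = {s1, s2}" using assms(6,14) t by auto
  then have "\<not> 0 < \<beta> $ i" if "i \<noteq> s" "i \<noteq> t" for i
    using stubborn that by blast
  then have \<beta>_others: "\<forall>i. i \<noteq> s \<and> i \<noteq> t \<longrightarrow> \<beta> $ i = 0"
    using assms(5) by (simp add: order_antisym_conv not_less)
  have no_loop: "W $ s $ s = 0" using assms(11,12,14) by auto
  define h where "h = column s (FJ_P W \<beta>)"
  have h: "fj_solution W \<beta> (\<chi> i. if i = s then \<beta> $ s else 0) h"
    unfolding h_def
    by (rule FJ_P_column_fj_solution[OF fj_matrix_invertible[OF rs sc assms(5) \<beta>_st(1)]])
  have "\<forall>i. h $ i < 1" using fj_solution_lt_one[OF rs sc \<beta> \<beta>_st t(2) h] by blast
  moreover have "\<beta> $ s \<le> 1" using assms(5) by blast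
  ultimately obtain a b d where abd: "a \<noteq> b" "b \<noteq> d" "a \<noteq> d" "0 < W $ b $ d" "h $ d < h $ a"
    using exists_improving_edge_mod[OF rs sc assms(1) t(2) \<beta>_others \<beta>_st(1) _ no_loop h] by blast
  define w where "w = W $ b $ d / 2"
  have "valid_edge_mod W a b d w" using abd by (simp add: valid_edge_mod_def w_def)
  moreover have "influence_centrality W \<beta> $ s < influence_centrality (edge_mod W a b d w) \<beta> $ s"
    by (rule influence_centrality_edge_mod_less[OF rs sc \<beta> \<beta>_st(1) abd(3)])
      (use abd in \<open>simp_all add: w_def h_def column_def\<close>)
  ultimately show ?thesis by blast
qed

end
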